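(* In the model described in the context, with $\tilde k(p)=(1+\theta)\big(1-(1-p)^c\big)$ for $c>1$ and $\theta\ge0$, the indemnity $I\equiv0$ is never optimal.
   Context: Let $X\ge0$ be a random variable with $\mathbb{P}(X=0)=1-q$, where $q\in(0,1]$, and with density $q\lambda e^{-\lambda x}$ on $(0,\infty)$, where $\lambda>0$. So $S_X(t)=qe^{-\lambda t}$ for $t\ge0$. $\mathcal{I}_c$ is the set of $I:[0,\infty)\to[0,\infty)$ with $0\le I(x)\le x$ and $0\le I(x)-I(y)\le x-y$ for $0\le y\le x$. For $Y\ge0$ with $S_Y(t)=\mathbb{P}(Y>t)$, the premium is $$\pi(Y)=\int_0^\infty\tilde k(S_Y(t))\,dt.$$ The buyer has wealth $w$ and utility $u$ with $u'(x)=e^{-\gamma x}$, $\gamma>0$. She chooses $I\in\mathcal{I}_c$ to maximize $\mathbb{E}[u(w-X+I(X)-\pi(I(X)))]$; the buyer's distortion is the identity. *)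

theory Defs
  imports "HOL-Analysis.Analysis"
begin

definition Ic :: "(real \<Rightarrow> real) set" where
  "Ic = {I. (\<forall>x. 0 \<le> x \<longrightarrow> 0 \<le> I x \<and> I x \<le> x) \<and>
           (\<forall>x y. 0 \<le> y \<and> y \<le> x \<longrightarrow> 0 \<le> I x - I y \<and> I x - I y \<le> x - y)}"

text \<open>Survival function of I(X), where P(X=0)=1-q and X has density q lam e^(-lam x) on (0,oo).\<close>
definition survI :: "real \<Rightarrow> real \<Rightarrow> (real \<Rightarrow> real) \<Rightarrow> real \<Rightarrow> real" where
  "survI q lam I t = (1 - q) * (if t < I 0 then 1 else 0)
      + (LINT x:{x. 0 < x \<and> t < I x}|lborel. q * lam * exp (- lam * x))"

definition premium :: "(real \<Rightarrow> real) \<Rightarrow> real \<Rightarrow> real \<Rightarrow> (real \<Rightarrow> real) \<Rightarrow> real" where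
  "premium ktil q lam I = (LINT t:{0..}|lborel. ktil (survI q lam I t))"

definition expectX :: "real \<Rightarrow> real \<Rightarrow> (real \<Rightarrow> real) \<Rightarrow> ereal" where
  "expectX q lam g =
     ereal ((1 - q) * g 0)
     + enn2ereal (\<integral>\<^sup>+ x. indicator {0<..} x * ennreal (q * lam * exp (- lam * x) * max (g x) 0) \<partial>lborel)
     - enn2ereal (\<integral>\<^sup>+ x. indicator {0<..} x * ennreal (q * lam * exp (- lam * x) * max (- g x) 0) \<partial>lborel)"

definition EU :: "(real \<Rightarrow> real) \<Rightarrow> real \<Rightarrow> (real \<Rightarrow> real) \<Rightarrow> real \<Rightarrow> real \<Rightarrow> (real \<Rightarrow> real) \<Rightarrow> ereal" where
  "EU u w ktil q lam I = expectX q lam (\<lambda>x. u (w - x + I x - premium ktil q lam I))"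

end

theory Submission
  imports Defs
begin

text \<open>
  Since \<open>u' y = exp (- \<gamma> y)\<close>, the utility is \<open>u y = K - exp (- \<gamma> y) / \<gamma>\<close>, and for an indemnity
  with \<open>I 0 = 0\<close> and premium \<open>\<pi>\<close> the expected utility is
  \<open>K - exp (\<gamma> (\<pi> - w)) / \<gamma> * (1 - q + E[exp (\<gamma> (X - I X)); X > 0])\<close>.
  If \<open>\<lambda> \<le> \<gamma>\<close>, the last expectation is infinite for \<open>I = 0\<close>: no insurance has expected
  utility \<open>-\<infinity>\<close>, and full insurance does better. If \<open>\<lambda> > \<gamma>\<close>, compare \<open>I = 0\<close> with the
  stop-loss contract \<open>(x - d)\<^sup>+\<close>. Since \<open>ktil p \<le> (1 + \<theta>) c p\<close>, its premium is
  \<open>O(exp (- \<lambda> d))\<close>, whereas it lowers the expectation by exactly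
  \<open>q \<gamma> exp (- (\<lambda> - \<gamma>) d) / (\<lambda> - \<gamma>)\<close>; for a large deductible the gain outweighs the loading.
\<close>

section \<open>Exponential integrals on half-lines\<close>

lemma nn_integral_exp_Ici:
  fixes m a C :: real
  assumes "0 < m" "0 \<le> C"
  shows "(\<integral>\<^sup>+x. indicator {a..} x * ennreal (C * exp (- m * x)) \<partial>lborel) = ennreal (C * exp (- m * a) / m)"
proof -
  have "(\<lambda>x. indicator {a..} x * exp (- m * x)) = (\<lambda>x. if x \<in> {a..} then exp (- m * x) else 0)"
    by (auto simp: indicator_def)
  then have "((\<lambda>x. indicator {a..} x * exp (- m * x)) has_integral exp (- m * a) / m) UNIV"
    using has_integral_exp_minus_to_infinity[OF \<open>0 < m\<close>, of a]
    by (simp only: has_integral_restrict_UNIV)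
  then have "(\<integral>\<^sup>+x. ennreal (indicator {a..} x * exp (- m * x)) \<partial>lborel) = ennreal (exp (- m * a) / m)"
    by (intro nn_integral_has_integral_lborel) auto
  moreover have "(\<integral>\<^sup>+x. indicator {a..} x * ennreal (C * exp (- m * x)) \<partial>lborel)
      = (\<integral>\<^sup>+x. ennreal C * ennreal (indicator {a..} x * exp (- m * x)) \<partial>lborel)"
    using assms by (intro nn_integral_cong) (auto simp: indicator_def ennreal_mult)
  moreover have "\<dots> = ennreal C * (\<integral>\<^sup>+x. ennreal (indicator {a..} x * exp (- m * x)) \<partial>lborel)"
    by (rule nn_integral_cmult) auto
  ultimately show ?thesis
    using assms by (simp add: ennreal_mult[symmetric])
qed

lemma nn_integral_exp_Ioi:
  fixes m a C :: real
  assumes "0 < m" "0 \<le> C"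
  shows "(\<integral>\<^sup>+x. indicator {a<..} x * ennreal (C * exp (- m * x)) \<partial>lborel) = ennreal (C * exp (- m * a) / m)"
proof -
  have "(\<integral>\<^sup>+x. indicator {a<..} x * ennreal (C * exp (- m * x)) \<partial>lborel)
      = (\<integral>\<^sup>+x. indicator {a..} x * ennreal (C * exp (- m * x)) \<partial>lborel)"
    using AE_lborel_singleton[of a] by (intro nn_integral_cong_AE) (auto elim!: eventually_mono simp: indicator_def)
  with nn_integral_exp_Ici[OF assms] show ?thesis by simp
qed

lemma set_integral_eq_of_nn_integral:
  fixes f :: "real \<Rightarrow> real"
  assumes [measurable]: "A \<in> sets borel" "f \<in> borel_measurable borel"
    and "\<And>x. x \<in> A \<Longrightarrow> 0 \<le> f x" "0 \<le> r"
    and nn: "(\<integral>\<^sup>+x. indicator A x * ennreal (f x) \<partial>lborel) = ennreal r"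
  shows "set_integrable lborel A f" "(LINT x:A|lborel. f x) = r"
proof -
  have "(\<integral>\<^sup>+x. ennreal (indicator A x *\<^sub>R f x) \<partial>lborel) = ennreal r"
    unfolding nn[symmetric] by (intro nn_integral_cong) (auto simp: indicator_def)
  then have "integrable lborel (\<lambda>x. indicator A x *\<^sub>R f x) \<and> integral\<^sup>L lborel (\<lambda>x. indicator A x *\<^sub>R f x) = r"
    using assms by (subst (asm) nn_integral_eq_integrable) (auto simp: indicator_def)
  then show "set_integrable lborel A f" "(LINT x:A|lborel. f x) = r"
    by (simp_all add: set_integrable_def set_lebesgue_integral_def)
qed

lemma nn_integral_density_add:
  fixes \<rho> f h :: "real \<Rightarrow> real" and A :: "real set"
  assumes [measurable]: "A \<in> sets borel" "\<rho> \<in> borel_measurable borel"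
    "f \<in> borel_measurable borel" "h \<in> borel_measurable borel"
    and "\<And>x. x \<in> A \<Longrightarrow> 0 \<le> \<rho> x" "\<And>x. x \<in> A \<Longrightarrow> 0 \<le> f x" "\<And>x. x \<in> A \<Longrightarrow> 0 \<le> h x"
  shows "(\<integral>\<^sup>+x. indicator A x * ennreal (\<rho> x * f x) \<partial>lborel) + (\<integral>\<^sup>+x. indicator A x * ennreal (\<rho> x * h x) \<partial>lborel)
       = (\<integral>\<^sup>+x. indicator A x * ennreal (\<rho> x * (f x + h x)) \<partial>lborel)"
proof -
  have "(\<integral>\<^sup>+x. indicator A x * ennreal (\<rho> x * f x) \<partial>lborel) + (\<integral>\<^sup>+x. indicator A x * ennreal (\<rho> x * h x) \<partial>lborel)
      = (\<integral>\<^sup>+x. indicator A x * ennreal (\<rho> x * f x) + indicator A x * ennreal (\<rho> x * h x) \<partial>lborel)"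
    by (rule nn_integral_add[symmetric]) auto
  also have "\<dots> = (\<integral>\<^sup>+x. indicator A x * ennreal (\<rho> x * (f x + h x)) \<partial>lborel)"
    using assms by (intro nn_integral_cong) (auto simp: indicator_def distrib_left ennreal_plus)
  finally show ?thesis .
qed

lemma emeasure_lborel_Ioi: "emeasure lborel {a::real<..} = \<infinity>"
proof -
  have lower: "of_nat n \<le> emeasure lborel {a<..}" for n
  proof -
    have "emeasure lborel {a<..<a + real n} \<le> emeasure lborel {a<..}"
      by (intro emeasure_mono) auto
    then show ?thesis by (simp add: ennreal_of_nat_eq_real_of_nat)
  qed
  show ?thesis
  proof (rule ccontr)
    assume "emeasure lborel {a<..} \<noteq> \<infinity>"
    then obtain n where "emeasure lborel {a<..} < of_nat n"
      using ennreal_Ex_less_of_nat by (auto simp: less_top)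
    with lower show False by (meson leD)
  qed
qed

lemma one_minus_powr_le:
  fixes y c :: real
  assumes "0 \<le> y" "y \<le> 1" "1 \<le> c"
  shows "1 - y powr c \<le> c * (1 - y)"
proof (cases "0 < y \<and> y < 1")
  case True
  have "\<exists>z>y. z < 1 \<and> 1 powr c - y powr c = (1 - y) * (c * z powr (c - 1))"
    using True by (intro MVT2) (auto intro!: derivative_eq_intros)
  then obtain z where z: "y < z" "z < 1" "1 powr c - y powr c = (1 - y) * (c * z powr (c - 1))"
    by blast
  have "z powr (c - 1) \<le> 1"
    using z True assms by (intro powr_le1) auto
  then have "(1 - y) * (c * z powr (c - 1)) \<le> (1 - y) * c"
    using assms by (intro mult_left_mono) auto
  then show ?thesis
    using z by (simp add: mult_ac)
next
  case False
  with assms have "y = 0 \<or> y = 1"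
    by auto
  with assms show ?thesis
    by auto
qed

lemma power_distortion_bounds:
  fixes s c theta :: real
  assumes "0 \<le> s" "s \<le> 1" "1 \<le> c" "0 \<le> theta"
  shows "0 \<le> (1 + theta) * (1 - (1 - s) powr c) \<and> (1 + theta) * (1 - (1 - s) powr c) \<le> (1 + theta) * c * s"
proof -
  have "(1 - s) powr c \<le> 1"
    using assms by (intro powr_le1) auto
  moreover have "1 - (1 - s) powr c \<le> c * s"
    using one_minus_powr_le[of "1 - s" c] assms by simp
  ultimately show ?thesis
    using assms by (simp add: mult.assoc mult_left_mono)
qed

lemma exp_minus_one_le: "exp y - 1 \<le> y * exp (y::real)"
proof -
  have "(1 - y) * exp y \<le> exp (- y) * exp y"
    using exp_ge_add_one_self[of "- y"] by (intro mult_right_mono) auto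
  then show ?thesis by (simp add: exp_minus_inverse algebra_simps)
qed

lemma exp_mult_diff_less:
  fixes gamma beta delta p A B :: real
  assumes "0 < gamma" "0 \<le> beta" "0 \<le> delta" "delta \<le> 1" "p \<le> beta * delta"
    and "0 \<le> B" "B \<le> A" and small: "gamma * beta * exp (gamma * beta) * delta * A < B"
  shows "exp (gamma * p) * (A - B) < A"
proof -
  define T where "T = gamma * beta * exp (gamma * beta) * delta"
  have "0 \<le> T"
    using assms by (simp add: T_def)
  have "exp (gamma * p) - 1 \<le> T"
  proof (cases "p \<le> 0")
    case True
    then have "exp (gamma * p) \<le> 1"
      using assms by (simp add: mult_nonneg_nonpos)
    with \<open>0 \<le> T\<close> show ?thesis by linarith
  next
    case False
    have "p \<le> beta"
      using assms mult_left_le[of delta beta] by linarith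
    have "exp (gamma * p) - 1 \<le> gamma * p * exp (gamma * p)"
      by (rule exp_minus_one_le)
    also have "\<dots> \<le> gamma * (beta * delta) * exp (gamma * beta)"
      using False assms \<open>p \<le> beta\<close> by (intro mult_mono) auto
    finally show ?thesis
      by (simp add: T_def mult_ac)
  qed
  then have "(exp (gamma * p) - 1) * (A - B) \<le> T * (A - B)"
    using assms by (intro mult_right_mono) auto
  also have "\<dots> \<le> T * A"
    using \<open>0 \<le> T\<close> \<open>0 \<le> B\<close> by (simp add: algebra_simps)
  also have "\<dots> < B"
    using small by (simp add: T_def)
  finally show ?thesis
    by (simp add: algebra_simps)
qed

lemma ex_exp_decay_dominated:
  fixes C D gamma lam :: real
  assumes "0 < gamma" "0 < D"
  shows "\<exists>d\<ge>0. C * exp (- lam * d) < D * exp (- (lam - gamma) * d)"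
proof -
  define d where "d = ln (1 + \<bar>C\<bar> / D) / gamma"
  have "0 \<le> d"
    using assms by (simp add: d_def)
  have "exp (gamma * d) = 1 + \<bar>C\<bar> / D"
    using assms by (simp add: d_def add_pos_nonneg)
  then have "C < D * exp (gamma * d)"
    using assms by (simp add: distrib_left)
  then have "C * exp (- lam * d) < D * exp (gamma * d) * exp (- lam * d)"
    by (intro mult_strict_right_mono) auto
  also have "\<dots> = D * exp (- (lam - gamma) * d)"
    by (simp add: mult_exp_exp algebra_simps)
  finally show ?thesis
    using \<open>0 \<le> d\<close> by blast
qed

section \<open>Expected exponential utility\<close>

lemma exponential_utility_eq:
  fixes u :: "real \<Rightarrow> real" and gamma :: real
  assumes "0 < gamma" and u': "\<And>x. (u has_real_derivative exp (- gamma * x)) (at x)"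
  shows "u y = u 0 + 1 / gamma - exp (- gamma * y) / gamma"
proof -
  have "((\<lambda>x. u x + exp (- gamma * x) / gamma) has_real_derivative 0) (at x)" for x
    using u'[of x] \<open>0 < gamma\<close> by (auto intro!: derivative_eq_intros)
  then have "u y + exp (- gamma * y) / gamma = u 0 + exp (- gamma * 0) / gamma"
    by (intro DERIV_isconst_all allI)
  then show ?thesis by simp
qed

lemma enn2ereal_diff_eq_of_add_eq:
  fixes P N H :: ennreal and a b :: real
  assumes sum: "P + H + ennreal b = N + ennreal a" and "P \<noteq> \<infinity>" "0 \<le> a" "0 \<le> b"
  shows "enn2ereal P - enn2ereal N = ereal (a - b) - enn2ereal H"
proof (cases "H = \<infinity>")
  case True
  then have "N = \<infinity>" using sum by (metis add_top ennreal_add_eq_top ennreal_neq_top infinity_ennreal_def)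
  then show ?thesis using True \<open>P \<noteq> \<infinity>\<close> by (cases P) auto
next
  case False
  then have "N \<noteq> \<infinity>" using sum \<open>P \<noteq> \<infinity>\<close> by (metis ennreal_add_eq_top ennreal_neq_top infinity_ennreal_def)
  then obtain p h n where "P = ennreal p" "H = ennreal h" "N = ennreal n" "0 \<le> p" "0 \<le> h" "0 \<le> n"
    using False \<open>P \<noteq> \<infinity>\<close> by (metis ennreal_cases infinity_ennreal_def)
  moreover from this have "p + h + b = n + a"
    using sum assms by (simp add: ennreal_plus[symmetric] del: ennreal_plus)
  ultimately show ?thesis by (simp add: enn2ereal_ennreal)
qed

lemma expectX_bounded_above:
  fixes q lam a :: real and g :: "real \<Rightarrow> real"
  assumes "0 \<le> q" "0 < lam" and [measurable]: "g \<in> borel_measurable borel"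
    and le: "\<And>x. 0 < x \<Longrightarrow> g x \<le> a"
  shows "expectX q lam g = ereal ((1 - q) * g 0 + q * a)
     - enn2ereal (\<integral>\<^sup>+x. indicator {0<..} x * ennreal (q * lam * exp (- lam * x) * (a - g x)) \<partial>lborel)"
proof -
  define \<rho> where "\<rho> x = q * lam * exp (- lam * x)" for x
  have \<rho>_nonneg: "0 \<le> \<rho> x" for x
    using assms by (simp add: \<rho>_def)
  define \<Phi> where "\<Phi> f = (\<integral>\<^sup>+x. indicator {0<..} x * ennreal (\<rho> x * f x) \<partial>lborel)" for f
  have \<Phi>_const: "\<Phi> (\<lambda>_. c) = ennreal (q * c)" if "0 \<le> c" for c
    using nn_integral_exp_Ioi[of lam "q * lam * c" 0] assms that
    by (simp add: \<Phi>_def \<rho>_def mult_ac)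
  have \<Phi>_add: "\<Phi> f + \<Phi> h = \<Phi> (\<lambda>x. f x + h x)"
    if "f \<in> borel_measurable borel" "h \<in> borel_measurable borel"
      and "\<And>x. 0 < x \<Longrightarrow> 0 \<le> f x" "\<And>x. 0 < x \<Longrightarrow> 0 \<le> h x" for f h
    unfolding \<Phi>_def using that \<rho>_nonneg by (intro nn_integral_density_add) (auto simp: \<rho>_def)
  \<comment> \<open>Only sums appear below: \<open>?N\<close> and \<open>?H\<close> may both be infinite.\<close>
  let ?P = "\<Phi> (\<lambda>x. max (g x) 0)" and ?N = "\<Phi> (\<lambda>x. max (- g x) 0)" and ?H = "\<Phi> (\<lambda>x. a - g x)"
  have "?P + ?H + ennreal (q * max (- a) 0) = \<Phi> (\<lambda>x. max (g x) 0 + (a - g x) + max (- a) 0)"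
    using le by (simp add: \<Phi>_const[symmetric] \<Phi>_add)
  also have "\<dots> = \<Phi> (\<lambda>x. max (- g x) 0 + max a 0)"
    unfolding \<Phi>_def by (intro arg_cong[where f="\<lambda>f. integral\<^sup>N lborel f"] ext) (auto simp: max_def)
  also have "\<dots> = ?N + ennreal (q * max a 0)"
    by (simp add: \<Phi>_const[symmetric] \<Phi>_add)
  finally have sum: "?P + ?H + ennreal (q * max (- a) 0) = ?N + ennreal (q * max a 0)" .
  have "max (g x) 0 \<le> max a 0" if "0 < x" for x
    using le[OF that] by (rule max.mono) simp
  then have "?P \<le> \<Phi> (\<lambda>_. max a 0)"
    unfolding \<Phi>_def using \<rho>_nonneg
    by (intro nn_integral_mono) (auto simp: indicator_def intro!: ennreal_leI mult_left_mono)
  then have "?P \<noteq> \<infinity>"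
    using \<Phi>_const[of "max a 0"] by (auto simp: top_unique)
  then obtain p where p: "?P = ennreal p" "0 \<le> p"
    by (cases ?P) auto
  have "expectX q lam g = ereal ((1 - q) * g 0) + enn2ereal ?P - enn2ereal ?N"
    unfolding expectX_def \<Phi>_def \<rho>_def ..
  also have "\<dots> = ereal ((1 - q) * g 0) + (enn2ereal ?P - enn2ereal ?N)"
    unfolding p(1) using p(2) by (cases "enn2ereal ?N") (simp_all add: enn2ereal_ennreal)
  also have "enn2ereal ?P - enn2ereal ?N = ereal (q * max a 0 - q * max (- a) 0) - enn2ereal ?H"
    using enn2ereal_diff_eq_of_add_eq[OF sum \<open>?P \<noteq> \<infinity>\<close>] assms by simp
  also have "q * max a 0 - q * max (- a) 0 = q * a"
    by (simp add: max_def)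
  finally show ?thesis
    by (cases "enn2ereal ?H") (simp_all add: \<Phi>_def \<rho>_def)
qed

text \<open>\<open>E[exp (\<gamma> (X - I X)); X > 0]\<close>, the factor through which the indemnity itself
  (as opposed to its premium) enters the expected exponential utility.\<close>

definition retained_exp_moment :: "real \<Rightarrow> real \<Rightarrow> real \<Rightarrow> (real \<Rightarrow> real) \<Rightarrow> ennreal" where
  "retained_exp_moment q lam gamma I =
     (\<integral>\<^sup>+x. indicator {0<..} x * ennreal (q * lam * exp (- lam * x) * exp (gamma * (x - I x))) \<partial>lborel)"

lemma EU_exponential_utility:
  fixes u I ktil :: "real \<Rightarrow> real" and K gamma q lam w :: real
  assumes u_eq: "\<And>y. u y = K - exp (- gamma * y) / gamma"
    and "0 < gamma" "0 \<le> q" "0 < lam" and [measurable]: "I \<in> borel_measurable borel" and "I 0 = 0"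
  defines "L \<equiv> exp (gamma * (premium ktil q lam I - w)) / gamma"
  shows "EU u w ktil q lam I
     = ereal (K - (1 - q) * L) - enn2ereal (ennreal L * retained_exp_moment q lam gamma I)"
proof -
  define p where "p = premium ktil q lam I"
  have "0 \<le> L"
    using \<open>0 < gamma\<close> by (simp add: L_def)
  have exp_eq: "exp (- gamma * (w - x + I x - p)) / gamma = L * exp (gamma * (x - I x))" for x
    by (simp add: L_def p_def mult_exp_exp algebra_simps)
  have "EU u w ktil q lam I = expectX q lam (\<lambda>x. K - exp (- gamma * (w - x + I x - p)) / gamma)"
    unfolding EU_def p_def u_eq ..
  also have "\<dots> = ereal ((1 - q) * (K - exp (- gamma * (w - 0 + I 0 - p)) / gamma) + q * K)
     - enn2ereal (\<integral>\<^sup>+x. indicator {0<..} x * ennreal (q * lam * exp (- lam * x)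
          * (K - (K - exp (- gamma * (w - x + I x - p)) / gamma))) \<partial>lborel)"
    using assms by (intro expectX_bounded_above) auto
  also have "\<dots> = ereal ((1 - q) * (K - L) + q * K)
     - enn2ereal (\<integral>\<^sup>+x. indicator {0<..} x * ennreal (q * lam * exp (- lam * x) * (L * exp (gamma * (x - I x)))) \<partial>lborel)"
    unfolding exp_eq using \<open>I 0 = 0\<close> by simp
  also have "(\<integral>\<^sup>+x. indicator {0<..} x * ennreal (q * lam * exp (- lam * x) * (L * exp (gamma * (x - I x)))) \<partial>lborel)
      = (\<integral>\<^sup>+x. ennreal L * (indicator {0<..} x * ennreal (q * lam * exp (- lam * x) * exp (gamma * (x - I x)))) \<partial>lborel)"
    by (intro nn_integral_cong) (auto simp: indicator_def mult.left_commute[of _ L] ennreal_mult' \<open>0 \<le> L\<close>)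
  also have "\<dots> = ennreal L * retained_exp_moment q lam gamma I"
    unfolding retained_exp_moment_def by (rule nn_integral_cmult) auto
  finally show ?thesis
    by (simp add: algebra_simps)
qed

lemma EU_exponential_utility_of_moment:
  fixes u I ktil :: "real \<Rightarrow> real" and K gamma q lam w m :: real
  assumes u_eq: "\<And>y. u y = K - exp (- gamma * y) / gamma"
    and "0 < gamma" "0 \<le> q" "0 < lam" "I \<in> borel_measurable borel" "I 0 = 0"
    and "retained_exp_moment q lam gamma I = ennreal m" "0 \<le> m"
  shows "EU u w ktil q lam I = ereal (K - exp (gamma * (premium ktil q lam I - w)) / gamma * (1 - q + m))"
proof -
  define L where "L = exp (gamma * (premium ktil q lam I - w)) / gamma"
  have "0 \<le> L"
    using \<open>0 < gamma\<close> by (simp add: L_def)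
  have "EU u w ktil q lam I = ereal (K - (1 - q) * L) - enn2ereal (ennreal L * ennreal m)"
    using EU_exponential_utility[OF assms(1-6)] assms(7) by (simp add: L_def)
  also have "\<dots> = ereal (K - L * (1 - q + m))"
    using \<open>0 \<le> L\<close> \<open>0 \<le> m\<close>
    by (simp add: ennreal_mult[symmetric] enn2ereal_ennreal algebra_simps del: ennreal_mult)
  finally show ?thesis
    by (simp add: L_def)
qed

section \<open>Stop-loss contracts\<close>

definition stop_loss :: "real \<Rightarrow> real \<Rightarrow> real" where
  "stop_loss d x = max (x - d) 0"

lemma borel_measurable_stop_loss [measurable]: "stop_loss d \<in> borel_measurable borel"
  unfolding stop_loss_def[abs_def] by measurable

lemma stop_loss_in_Ic: "0 \<le> d \<Longrightarrow> stop_loss d \<in> Ic"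
  by (auto simp: Ic_def stop_loss_def)

lemma retained_exp_moment_no_insurance_infinite:
  assumes "0 < q" "0 < lam" "lam \<le> gamma"
  shows "retained_exp_moment q lam gamma (\<lambda>x. 0) = \<infinity>"
proof -
  have "(\<integral>\<^sup>+x. ennreal (q * lam) * indicator {0<..} (x::real) \<partial>lborel) \<le> retained_exp_moment q lam gamma (\<lambda>x. 0)"
    unfolding retained_exp_moment_def
  proof (intro nn_integral_mono)
    fix x :: real
    have "0 < x \<Longrightarrow> q * lam * 1 \<le> q * lam * (exp (- lam * x) * exp (gamma * x))"
      using assms by (intro mult_left_mono) (auto simp: mult_exp_exp algebra_simps)
    then show "ennreal (q * lam) * indicator {0<..} x
        \<le> indicator {0<..} x * ennreal (q * lam * exp (- lam * x) * exp (gamma * (x - 0)))"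
      by (auto simp: indicator_def mult_ac intro!: ennreal_leI)
  qed
  also have "(\<integral>\<^sup>+x. ennreal (q * lam) * indicator {0<..} (x::real) \<partial>lborel) = \<infinity>"
    using assms by (simp add: nn_integral_cmult_indicator emeasure_lborel_Ioi ennreal_mult_top)
  finally show ?thesis
    by (simp add: top_unique)
qed

lemma retained_exp_moment_no_insurance:
  assumes "0 \<le> q" "0 < lam" "gamma < lam"
  shows "retained_exp_moment q lam gamma (\<lambda>x. 0) = ennreal (q * lam / (lam - gamma))"
proof -
  have "retained_exp_moment q lam gamma (\<lambda>x. 0)
      = (\<integral>\<^sup>+x. indicator {0<..} x * ennreal (q * lam * exp (- (lam - gamma) * x)) \<partial>lborel)"
    unfolding retained_exp_moment_def by (simp add: mult_exp_exp algebra_simps)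
  also have "\<dots> = ennreal (q * lam / (lam - gamma))"
    using assms nn_integral_exp_Ioi[of "lam - gamma" "q * lam" 0] by simp
  finally show ?thesis .
qed

lemma retained_exp_moment_full_insurance:
  assumes "0 \<le> q" "0 < lam"
  shows "retained_exp_moment q lam gamma (\<lambda>x. x) = ennreal q"
  using assms nn_integral_exp_Ioi[of lam "q * lam" 0] by (simp add: retained_exp_moment_def)

text \<open>Adding the tail beyond \<open>d\<close> to both sides relates the stop-loss moment to the
  no-insurance moment without subtracting in \<^typ>\<open>ennreal\<close>.\<close>

lemma retained_exp_moment_stop_loss_add_tail:
  assumes "0 \<le> d"
  shows "retained_exp_moment q lam gamma (stop_loss d)
         + (\<integral>\<^sup>+x. indicator {d<..} x * ennreal (q * lam * exp (- lam * x) * exp (gamma * x)) \<partial>lborel)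
       = retained_exp_moment q lam gamma (\<lambda>x. 0)
         + (\<integral>\<^sup>+x. indicator {d<..} x * ennreal (q * lam * exp (- lam * x) * exp (gamma * d)) \<partial>lborel)"
proof -
  define \<rho> where "\<rho> x = q * lam * exp (- lam * x)" for x
  have retained: "x - stop_loss d x = min x d" for x
    by (simp add: stop_loss_def)
  have "retained_exp_moment q lam gamma (stop_loss d)
         + (\<integral>\<^sup>+x. indicator {d<..} x * ennreal (\<rho> x * exp (gamma * x)) \<partial>lborel)
      = (\<integral>\<^sup>+x. indicator {0<..} x * ennreal (\<rho> x * exp (gamma * min x d))
           + indicator {d<..} x * ennreal (\<rho> x * exp (gamma * x)) \<partial>lborel)"
    unfolding retained_exp_moment_def retained \<rho>_def
    by (rule nn_integral_add[symmetric]) auto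
  also have "\<dots> = (\<integral>\<^sup>+x. indicator {0<..} x * ennreal (\<rho> x * exp (gamma * (x - 0)))
           + indicator {d<..} x * ennreal (\<rho> x * exp (gamma * d)) \<partial>lborel)"
    using assms by (intro nn_integral_cong) (auto simp: indicator_def min_def add.commute)
  also have "\<dots> = retained_exp_moment q lam gamma (\<lambda>x. 0)
         + (\<integral>\<^sup>+x. indicator {d<..} x * ennreal (\<rho> x * exp (gamma * d)) \<partial>lborel)"
    unfolding retained_exp_moment_def \<rho>_def
    by (rule nn_integral_add) auto
  finally show ?thesis
    by (simp only: \<rho>_def)
qed

lemma retained_exp_moment_stop_loss:
  assumes "0 \<le> q" "0 < lam" "gamma < lam" "0 \<le> d"
  shows "retained_exp_moment q lam gamma (stop_loss d)
       = ennreal ((q * lam - q * gamma * exp (- (lam - gamma) * d)) / (lam - gamma))"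
proof -
  define e where "e = exp (- (lam - gamma) * d)"
  have "(\<integral>\<^sup>+x. indicator {d<..} x * ennreal (q * lam * exp (- lam * x) * exp (gamma * x)) \<partial>lborel)
      = (\<integral>\<^sup>+x. indicator {d<..} x * ennreal (q * lam * exp (- (lam - gamma) * x)) \<partial>lborel)"
    by (simp add: mult_exp_exp algebra_simps)
  also have "\<dots> = ennreal (q * lam * e / (lam - gamma))"
    unfolding e_def using assms by (intro nn_integral_exp_Ioi) auto
  finally have high: "(\<integral>\<^sup>+x. indicator {d<..} x * ennreal (q * lam * exp (- lam * x) * exp (gamma * x)) \<partial>lborel)
      = ennreal (q * lam * e / (lam - gamma))" .
  have "(\<integral>\<^sup>+x. indicator {d<..} x * ennreal (q * lam * exp (- lam * x) * exp (gamma * d)) \<partial>lborel)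
      = (\<integral>\<^sup>+x. indicator {d<..} x * ennreal (q * lam * exp (gamma * d) * exp (- lam * x)) \<partial>lborel)"
    by (simp add: mult_ac)
  also have "\<dots> = ennreal (q * e)"
    using assms nn_integral_exp_Ioi[of lam "q * lam * exp (gamma * d)" d]
    by (simp add: e_def mult_exp_exp algebra_simps)
  finally have cap: "(\<integral>\<^sup>+x. indicator {d<..} x * ennreal (q * lam * exp (- lam * x) * exp (gamma * d)) \<partial>lborel)
      = ennreal (q * e)" .
  have nonneg: "0 \<le> q * lam * e / (lam - gamma)" "0 \<le> q * lam / (lam - gamma)" "0 \<le> q * e"
    using assms by (simp_all add: e_def)
  have "retained_exp_moment q lam gamma (stop_loss d) + ennreal (q * lam * e / (lam - gamma))
      = ennreal (q * lam / (lam - gamma)) + ennreal (q * e)"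
    using retained_exp_moment_stop_loss_add_tail[OF \<open>0 \<le> d\<close>, of q lam gamma]
    unfolding high cap retained_exp_moment_no_insurance[OF assms(1-3)] .
  with nonneg have "retained_exp_moment q lam gamma (stop_loss d)
      = ennreal (q * lam / (lam - gamma) + q * e - q * lam * e / (lam - gamma))"
    by (metis ennreal_add_diff_cancel_right ennreal_minus ennreal_neq_top ennreal_plus)
  also have "q * lam / (lam - gamma) + q * e - q * lam * e / (lam - gamma)
      = (q * lam - q * gamma * e) / (lam - gamma)"
    using assms by (simp add: divide_simps) (simp add: algebra_simps)
  finally show ?thesis
    by (simp only: e_def)
qed

lemma survI_stop_loss:
  assumes "0 \<le> q" "0 < lam" "0 \<le> d" "0 \<le> t"
  shows "survI q lam (stop_loss d) t = q * exp (- lam * (t + d))"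
proof -
  have "{x. 0 < x \<and> t < stop_loss d x} = {t + d<..}"
    using assms by (auto simp: stop_loss_def)
  moreover have "(LINT x:{t + d<..}|lborel. q * lam * exp (- lam * x)) = q * exp (- lam * (t + d))"
    using assms nn_integral_exp_Ioi[of lam "q * lam" "t + d"]
    by (intro set_integral_eq_of_nn_integral) auto
  ultimately show ?thesis
    using assms by (simp add: survI_def stop_loss_def)
qed

lemma premium_no_insurance:
  assumes "ktil 0 = 0"
  shows "premium ktil q lam (\<lambda>x. 0) = 0"
proof -
  have "survI q lam (\<lambda>x. 0) t = 0" if "0 \<le> t" for t
    using that by (simp add: survI_def set_lebesgue_integral_def)
  then have "premium ktil q lam (\<lambda>x. 0) = (LINT t:{0::real..}|lborel. 0::real)"
    unfolding premium_def using assms by (intro set_lebesgue_integral_cong) auto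
  then show ?thesis
    by (simp add: set_lebesgue_integral_def)
qed

lemma premium_stop_loss_le:
  assumes "0 \<le> q" "q \<le> 1" "0 < lam" "0 \<le> d"
    and bound: "\<And>s. 0 \<le> s \<Longrightarrow> s \<le> 1 \<Longrightarrow> 0 \<le> ktil s \<and> ktil s \<le> C * s"
  shows "premium ktil q lam (stop_loss d) \<le> C * q * exp (- lam * d) / lam"
proof -
  define B where "B = C * q * exp (- lam * d)"
  have "0 \<le> C"
    using bound[of 1] by simp
  then have "0 \<le> B"
    using assms by (simp add: B_def)
  have surv01: "0 \<le> q * exp (- lam * (t + d)) \<and> q * exp (- lam * (t + d)) \<le> 1" if "0 \<le> t" for t
  proof -
    have "exp (- lam * (t + d)) \<le> 1"
      using assms that by simp
    then show ?thesis
      using assms by (simp add: mult_le_one)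
  qed
  have "(\<integral>\<^sup>+t. indicator {0..} t * ennreal (B * exp (- lam * t)) \<partial>lborel) = ennreal (B * exp (- lam * 0) / lam)"
    using \<open>0 \<le> B\<close> assms by (intro nn_integral_exp_Ici) auto
  from set_integral_eq_of_nn_integral[OF _ _ _ _ this]
  have B_int: "set_integrable lborel {0..} (\<lambda>t. B * exp (- lam * t))"
      "(LINT t:{0..}|lborel. B * exp (- lam * t)) = B / lam"
    using \<open>0 \<le> B\<close> assms by simp_all
  have "premium ktil q lam (stop_loss d) = (LINT t:{0..}|lborel. ktil (q * exp (- lam * (t + d))))"
    unfolding premium_def using assms by (intro set_lebesgue_integral_cong) (simp_all add: survI_stop_loss)
  also have "\<dots> \<le> (LINT t:{0..}|lborel. B * exp (- lam * t))"
    unfolding set_lebesgue_integral_def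
  proof (rule integral_mono')
    show "integrable lborel (\<lambda>t. indicator {0..} t *\<^sub>R (B * exp (- lam * t)))"
      using B_int(1) by (simp add: set_integrable_def)
    fix t :: real
    have "0 \<le> t \<Longrightarrow> ktil (q * exp (- lam * (t + d))) \<le> C * (q * exp (- lam * (t + d)))"
      using bound surv01 by blast
    moreover have "C * (q * exp (- lam * (t + d))) = B * exp (- lam * t)"
      by (simp add: B_def mult_exp_exp algebra_simps)
    ultimately show "indicator {0..} t *\<^sub>R ktil (q * exp (- lam * (t + d)))
        \<le> indicator {0..} t *\<^sub>R (B * exp (- lam * t))"
      by (simp add: indicator_def)
    show "0 \<le> indicator {0..} t *\<^sub>R (B * exp (- lam * t))"
      using \<open>0 \<le> B\<close> by simp
  qed
  finally show ?thesis
    using B_int(2) by (simp add: B_def)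
qed

section \<open>Comparison with no insurance\<close>

lemma full_insurance_beats_no_insurance_heavy_tail:
  fixes u ktil :: "real \<Rightarrow> real" and K gamma q lam w :: real
  assumes u_eq: "\<And>y. u y = K - exp (- gamma * y) / gamma"
    and "0 < gamma" "0 < q" "0 < lam" "lam \<le> gamma"
  shows "EU u w ktil q lam (\<lambda>x. 0) < EU u w ktil q lam (\<lambda>x. x)"
proof -
  have "ennreal (exp (gamma * (premium ktil q lam (\<lambda>x. 0) - w)) / gamma) \<noteq> 0"
    using assms by simp
  then have "EU u w ktil q lam (\<lambda>x. 0) = - \<infinity>"
    using assms by (simp add: EU_exponential_utility retained_exp_moment_no_insurance_infinite ennreal_mult_top)
  moreover have "EU u w ktil q lam (\<lambda>x. x)
      = ereal (K - exp (gamma * (premium ktil q lam (\<lambda>x. x) - w)) / gamma * (1 - q + q))"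
    using assms by (intro EU_exponential_utility_of_moment retained_exp_moment_full_insurance) auto
  ultimately show ?thesis
    by simp
qed

lemma EU_no_insurance_light_tail:
  fixes u ktil :: "real \<Rightarrow> real" and K gamma q lam w :: real
  assumes u_eq: "\<And>y. u y = K - exp (- gamma * y) / gamma"
    and "0 < gamma" "gamma < lam" "0 \<le> q" "ktil 0 = 0"
  shows "EU u w ktil q lam (\<lambda>x. 0) = ereal (K - exp (- gamma * w) / gamma * (1 - q + q * lam / (lam - gamma)))"
  using assms
  by (simp add: EU_exponential_utility_of_moment retained_exp_moment_no_insurance premium_no_insurance)

lemma EU_stop_loss_light_tail:
  fixes u ktil :: "real \<Rightarrow> real" and K gamma q lam w d :: real
  assumes u_eq: "\<And>y. u y = K - exp (- gamma * y) / gamma"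
    and "0 < gamma" "gamma < lam" "0 \<le> q" "0 \<le> d"
  shows "EU u w ktil q lam (stop_loss d) = ereal (K - exp (gamma * (premium ktil q lam (stop_loss d) - w)) / gamma
           * (1 - q + (q * lam - q * gamma * exp (- (lam - gamma) * d)) / (lam - gamma)))"
proof -
  have "exp (- (lam - gamma) * d) \<le> 1"
    using assms by (simp add: mult_nonpos_nonneg)
  then have "gamma * exp (- (lam - gamma) * d) \<le> gamma"
    using assms by (intro mult_left_le) auto
  then have "gamma * exp (- (lam - gamma) * d) \<le> lam"
    using assms by linarith
  then have "0 \<le> (q * lam - q * gamma * exp (- (lam - gamma) * d)) / (lam - gamma)"
    using assms by (simp add: mult.assoc mult_left_mono flip: right_diff_distrib)
  then show ?thesis
    using assms
    by (intro EU_exponential_utility_of_moment retained_exp_moment_stop_loss) (auto simp: stop_loss_def)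
qed

lemma no_insurance_less_stop_loss:
  fixes u ktil :: "real \<Rightarrow> real" and K gamma q lam w d :: real
  assumes u_eq: "\<And>y. u y = K - exp (- gamma * y) / gamma"
    and "0 < gamma" "gamma < lam" "0 \<le> q" "ktil 0 = 0" "0 \<le> d"
    and gain: "exp (gamma * premium ktil q lam (stop_loss d))
        * (1 - q + (q * lam - q * gamma * exp (- (lam - gamma) * d)) / (lam - gamma))
      < 1 - q + q * lam / (lam - gamma)"
  shows "EU u w ktil q lam (\<lambda>x. 0) < EU u w ktil q lam (stop_loss d)"
proof -
  define p where "p = premium ktil q lam (stop_loss d)"
  define A where "A = 1 - q + q * lam / (lam - gamma)"
  define A' where "A' = 1 - q + (q * lam - q * gamma * exp (- (lam - gamma) * d)) / (lam - gamma)"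
  have "exp (gamma * (p - w)) / gamma * A' = exp (- gamma * w) / gamma * (exp (gamma * p) * A')"
    using assms by (simp add: exp_add[symmetric] field_simps)
  also have "\<dots> < exp (- gamma * w) / gamma * A"
    using gain assms by (intro mult_strict_left_mono) (auto simp: p_def A_def A'_def)
  finally have "exp (gamma * (p - w)) / gamma * A' < exp (- gamma * w) / gamma * A" .
  moreover have "EU u w ktil q lam (\<lambda>x. 0) = ereal (K - exp (- gamma * w) / gamma * A)"
    unfolding A_def by (rule EU_no_insurance_light_tail[where ktil = ktil, OF u_eq assms(2-5)])
  moreover have "EU u w ktil q lam (stop_loss d) = ereal (K - exp (gamma * (p - w)) / gamma * A')"
    unfolding p_def A'_def by (rule EU_stop_loss_light_tail[OF u_eq assms(2-4,6)])
  ultimately show ?thesis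
    by simp
qed

lemma stop_loss_beats_no_insurance_light_tail:
  fixes u ktil :: "real \<Rightarrow> real" and K gamma q lam w C :: real
  assumes u_eq: "\<And>y. u y = K - exp (- gamma * y) / gamma"
    and "0 < gamma" "gamma < lam" "0 < q" "q \<le> 1" "ktil 0 = 0"
    and bound: "\<And>s. 0 \<le> s \<Longrightarrow> s \<le> 1 \<Longrightarrow> 0 \<le> ktil s \<and> ktil s \<le> C * s"
  shows "\<exists>d\<ge>0. EU u w ktil q lam (\<lambda>x. 0) < EU u w ktil q lam (stop_loss d)"
proof -
  define A where "A = 1 - q + q * lam / (lam - gamma)"
  define beta where "beta = C * q / lam"
  have "0 \<le> C"
    using bound[of 1] by simp
  then have "0 \<le> beta"
    using assms by (simp add: beta_def)
  obtain d where "0 \<le> d" and small: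
    "gamma * beta * exp (gamma * beta) * A * exp (- lam * d) < q * gamma / (lam - gamma) * exp (- (lam - gamma) * d)"
    using ex_exp_decay_dominated[of gamma "q * gamma / (lam - gamma)" "gamma * beta * exp (gamma * beta) * A" lam] assms
    by auto
  define B where "B = q * gamma * exp (- (lam - gamma) * d) / (lam - gamma)"
  have "premium ktil q lam (stop_loss d) \<le> beta * exp (- lam * d)"
    using premium_stop_loss_le[OF _ _ _ \<open>0 \<le> d\<close> bound] assms by (simp add: beta_def)
  moreover have "B \<le> A"
  proof -
    have "B \<le> q * gamma / (lam - gamma)"
      unfolding B_def using assms \<open>0 \<le> d\<close>
      by (intro divide_right_mono mult_left_le) (auto simp: mult_nonpos_nonneg)
    also have "\<dots> \<le> q * lam / (lam - gamma)"
      using assms by (intro divide_right_mono mult_left_mono) auto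
    finally show ?thesis
      using assms by (simp add: A_def)
  qed
  ultimately have "exp (gamma * premium ktil q lam (stop_loss d)) * (A - B) < A"
    using assms \<open>0 \<le> beta\<close> \<open>0 \<le> d\<close> small
    by (intro exp_mult_diff_less[where delta = "exp (- lam * d)"]) (auto simp: B_def mult_ac)
  then have "EU u w ktil q lam (\<lambda>x. 0) < EU u w ktil q lam (stop_loss d)"
    using assms \<open>0 \<le> d\<close>
    by (intro no_insurance_less_stop_loss[OF u_eq]) (auto simp: A_def B_def diff_divide_distrib add_diff_eq)
  with \<open>0 \<le> d\<close> show ?thesis
    by blast
qed

theorem proposition4p3:
  fixes q lam gamma c theta w :: real and u :: "real \<Rightarrow> real"
  assumes "0 < q" and "q \<le> 1" and "0 < lam" and "0 < gamma"
    and "1 < c" and "0 \<le> theta"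
    and "\<And>x. (u has_real_derivative exp (- gamma * x)) (at x)"
  shows "\<exists>I\<in>Ic. EU u w (\<lambda>p. (1 + theta) * (1 - (1 - p) powr c)) q lam (\<lambda>x. 0)
               < EU u w (\<lambda>p. (1 + theta) * (1 - (1 - p) powr c)) q lam I"
proof -
  define ktil where "ktil = (\<lambda>p::real. (1 + theta) * (1 - (1 - p) powr c))"
  have ktil_bound: "0 \<le> ktil s \<and> ktil s \<le> (1 + theta) * c * s" if "0 \<le> s" "s \<le> 1" for s
    unfolding ktil_def using that assms by (intro power_distortion_bounds) auto
  note u_eq = exponential_utility_eq[OF assms(4,7)]
  have "\<exists>I\<in>Ic. EU u w ktil q lam (\<lambda>x. 0) < EU u w ktil q lam I"
  proof (cases "lam \<le> gamma")
    case True
    then show ?thesis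
      using full_insurance_beats_no_insurance_heavy_tail[OF u_eq assms(4,1,3)] by (force simp: Ic_def)
  next
    case False
    then obtain d where "0 \<le> d" "EU u w ktil q lam (\<lambda>x. 0) < EU u w ktil q lam (stop_loss d)"
      using stop_loss_beats_no_insurance_light_tail[where ktil = ktil and w = w,
          OF u_eq assms(4) _ assms(1,2) _ ktil_bound] assms
      by (force simp: ktil_def)
    then show ?thesis
      using stop_loss_in_Ic by blast
  qed
  then show ?thesis
    by (simp only: ktil_def)
qed

end
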